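(* Let $A,B$ be points of the plane and $\vec\alpha,\vec\beta$ unit vectors with oriented angle $\Omega=(\widehat{\vec\alpha,\vec\beta})\in\,]0,\pi[$. Let $L>0$ and $X\in W^{2,\infty}(0,L;\mathbb{R}^2)$ with $\|X'(s)\|=1$ for all $s$, $X(0)=A$, $X(L)=B$, $X'(0)=\vec\alpha$, $X'(L)=\vec\beta$, and such that a continuous determination $\phi$ of the angle $\phi(s)=(\widehat{\vec\alpha,X'(s)})$ is nondecreasing on $[0,L]$. Then for every $s\in[0,L]$ the whole curve lies in the closed half-plane bounded by the tangent line at $X(s)$ on the side of $\vec N(s)=\sigma(X'(s))$, where $\sigma$ is the rotation by $+\pi/2$; i.e. $\langle X(t)-X(s),\sigma(X'(s))\rangle\ge0$ for all $s,t\in[0,L]$.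
   Context: $\langle\cdot,\cdot\rangle$ is the Euclidean inner product of $\mathbb{R}^2$. *)

theory Defs
  imports "HOL-Analysis.Analysis"
begin

text \<open>The plane R^2 is modelled by the complex numbers with the Euclidean inner
product (inner on complex: Re x * Re y + Im x * Im y).
sigma is the rotation by +pi/2.\<close>

definition sigma :: "complex \<Rightarrow> complex" where
  "sigma v = \<i> * v"

definition is_oriented_angle :: "complex \<Rightarrow> complex \<Rightarrow> real \<Rightarrow> bool" where
  "is_oriented_angle u v \<theta> \<longleftrightarrow> v = u * cis \<theta>"

end

theory Submission
  imports Defs
begin

text \<open>Write \<open>X' u = \<alpha> cis (\<phi> u)\<close>. For fixed \<open>s\<close>, the signed distance
  \<open>g u = \<langle>X u - X s, \<sigma>(X' s)\<rangle>\<close> to the tangent line at \<open>X s\<close> has derivative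
  \<open>sin (\<phi> u - \<phi> s)\<close>. Since \<open>\<phi>\<close> is nondecreasing with total variation \<open>\<Omega> < \<pi>\<close>,
  this derivative is \<open>\<le> 0\<close> before \<open>s\<close> and \<open>\<ge> 0\<close> after \<open>s\<close>, so \<open>g\<close> attains its
  minimum \<open>g s = 0\<close> at \<open>s\<close>.\<close>

lemma inner_sigma_cis:
  assumes "norm \<alpha> = 1"
  shows "inner (\<alpha> * cis a) (sigma (\<alpha> * cis b)) = sin (a - b)"
proof -
  have "(Re \<alpha>)\<^sup>2 + (Im \<alpha>)\<^sup>2 = 1"
    using assms by (metis cmod_power2 power_one)
  moreover have "inner (\<alpha> * cis a) (sigma (\<alpha> * cis b)) = ((Re \<alpha>)\<^sup>2 + (Im \<alpha>)\<^sup>2) * sin (a - b)"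
    by (simp add: inner_complex_def sigma_def sin_diff algebra_simps power2_eq_square)
  ultimately show ?thesis by simp
qed

lemma has_real_derivative_inner_left:
  assumes "(X has_vector_derivative v) F"
  shows "((\<lambda>u. inner (X u) c) has_real_derivative inner v c) F"
  using bounded_linear.has_vector_derivative[OF bounded_linear_inner_left assms]
  by (simp add: has_real_derivative_iff_has_vector_derivative)

lemma min_at_derivative_sign_change:
  fixes g g' :: "real \<Rightarrow> real"
  assumes deriv: "\<And>u. u \<in> {a..b} \<Longrightarrow> (g has_real_derivative g' u) (at u within {a..b})"
    and before: "\<And>u. a < u \<Longrightarrow> u < s \<Longrightarrow> g' u \<le> 0"
    and after: "\<And>u. s < u \<Longrightarrow> u < b \<Longrightarrow> g' u \<ge> 0"
    and "s \<in> {a..b}" "t \<in> {a..b}"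
  shows "g s \<le> g t"
proof -
  have deriv_at: "(g has_real_derivative g' u) (at u)" if "a < u" "u < b" for u
    using deriv[of u] that at_within_Icc_at[of a u b] by simp
  have cont: "continuous_on {a..b} g"
    using deriv by (meson DERIV_continuous continuous_on_eq_continuous_within)
  show ?thesis
  proof (cases "s \<le> t")
    case True
    show ?thesis
    proof (rule DERIV_nonneg_imp_increasing_open[OF True])
      show "\<exists>y. DERIV g u :> y \<and> 0 \<le> y" if "s < u" "u < t" for u
      proof -
        have "a < u" "u < b" using that assms(4,5) by auto
        then show ?thesis using that deriv_at after by blast
      qed
      show "continuous_on {s..t} g"
        using cont assms(4,5) by (auto intro: continuous_on_subset)
    qed
  next
    case False
    show ?thesis
    proof (rule DERIV_nonpos_imp_decreasing_open[of t s g])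
      show "\<exists>y. DERIV g u :> y \<and> y \<le> 0" if "t < u" "u < s" for u
      proof -
        have "a < u" "u < b" using that assms(4,5) by auto
        then show ?thesis using that deriv_at before by blast
      qed
      show "continuous_on {t..s} g"
        using cont assms(4,5) by (auto intro: continuous_on_subset)
    qed (use False in simp)
  qed
qed

lemma sin_diff_nonneg_if_mono_on:
  assumes "mono_on S \<phi>" "s \<in> S" "u \<in> S" "s \<le> u" "\<phi> u - \<phi> s < pi"
  shows "0 \<le> sin (\<phi> u - \<phi> s)"
  using assms by (intro sin_ge_zero) (auto dest: mono_onD)

lemma curve_left_of_tangent_if_turning_less_than_pi:
  fixes X X' :: "real \<Rightarrow> complex"
  assumes "norm \<alpha> = 1"
    and deriv: "\<And>u. u \<in> {a..b} \<Longrightarrow> (X has_vector_derivative X' u) (at u within {a..b})"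
    and angle: "\<And>u. u \<in> {a..b} \<Longrightarrow> X' u = \<alpha> * cis (\<phi> u)"
    and mono: "mono_on {a..b} \<phi>" and turning: "\<phi> b - \<phi> a < pi"
    and s: "s \<in> {a..b}" and t: "t \<in> {a..b}"
  shows "inner (X t - X s) (sigma (X' s)) \<ge> 0"
proof -
  define g where "g = (\<lambda>u. inner (X u) (sigma (X' s)))"
  have small: "\<phi> v - \<phi> u < pi" if "u \<in> {a..b}" "v \<in> {a..b}" for u v
    using mono_onD[OF mono, of a u] mono_onD[OF mono, of v b] that turning by auto
  have "(g has_real_derivative sin (\<phi> u - \<phi> s)) (at u within {a..b})" if "u \<in> {a..b}" for u
    using has_real_derivative_inner_left[OF deriv[OF that], of "sigma (X' s)"]
    by (simp add: g_def angle[OF that] angle[OF s] inner_sigma_cis[OF \<open>norm \<alpha> = 1\<close>])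
  moreover have "sin (\<phi> u - \<phi> s) \<le> 0" if "a < u" "u < s" for u
  proof -
    have "0 \<le> sin (\<phi> s - \<phi> u)"
      using sin_diff_nonneg_if_mono_on[OF mono, of u s] small[of u s] that s by auto
    then show ?thesis
      by (metis minus_diff_eq neg_0_le_iff_le sin_minus)
  qed
  moreover have "sin (\<phi> u - \<phi> s) \<ge> 0" if "s < u" "u < b" for u
    using sin_diff_nonneg_if_mono_on[OF mono, of s u] small[of s u] that s by auto
  ultimately have "g s \<le> g t"
    by (rule min_at_derivative_sign_change[of a b g "\<lambda>u. sin (\<phi> u - \<phi> s)"]) (use s t in auto)
  then show ?thesis
    by (simp add: g_def inner_diff_left)
qed

theorem lemmaA1:
  fixes A B \<alpha> \<beta> :: complex and \<Omega> L :: real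
    and X X' :: "real \<Rightarrow> complex" and \<phi> :: "real \<Rightarrow> real"
  assumes "norm \<alpha> = 1" and "norm \<beta> = 1"
    and "is_oriented_angle \<alpha> \<beta> \<Omega>" and "0 < \<Omega>" and "\<Omega> < pi"
    and "L > 0"
    and "\<forall>s\<in>{0..L}. (X has_vector_derivative X' s) (at s within {0..L})"
    and "\<exists>K. K-lipschitz_on {0..L} X'"
    and "\<forall>s\<in>{0..L}. norm (X' s) = 1"
    and "X 0 = A" and "X L = B" and "X' 0 = \<alpha>" and "X' L = \<beta>"
    and "continuous_on {0..L} \<phi>"
    and "\<forall>s\<in>{0..L}. is_oriented_angle \<alpha> (X' s) (\<phi> s)"
    and "\<phi> 0 = 0" and "\<phi> L = \<Omega>"
    and "mono_on {0..L} \<phi>"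
  shows "\<forall>s\<in>{0..L}. \<forall>t\<in>{0..L}. inner (X t - X s) (sigma (X' s)) \<ge> 0"
  using curve_left_of_tangent_if_turning_less_than_pi[of \<alpha> 0 L X X' \<phi>] assms
  by (simp add: is_oriented_angle_def)

end
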